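(* Let $n\ge2$, let $\mathsf r=[r_1,\dots,r_{2n-2}]$ be a tree-like factorization of $\lambda_n$, and let $k\in\{1,\dots,n-1\}$. Then exactly two of the reflections $r_1,\dots,r_{2n-2}$ increase $k$, namely the first and the last reflection in the sequence having an endpoint congruent to $k$ modulo $n$ (i.e. expressible as $(\!(a,b)\!)$ with $a\equiv k$ or $b\equiv k \pmod n$). Moreover there is an integer $b_k$ such that: if $b_k>k$, these two reflections are $(\!(b_k-n,k)\!)$ (the earlier one) and $(\!(k,b_k)\!)$ (the later one); if $b_k<k$, they are $(\!(b_k,k)\!)$ (the earlier one) and $(\!(k-n,b_k)\!)$ (the later one).
   Context: The affine symmetric group $\widetilde S_n$ is the group, under composition $(vw)(k)=v(w(k))$, of bijections $w:\mathbb Z\to\mathbb Z$ with $w(i+n)=w(i)+n$ and $\sum_{i=1}^n w(i)=\binom{n+1}{2}$. For $i\not\equiv j\pmod n$, $(\!(i,j)\!)$ is the affine reflection interchanging $i+kn$ and $j+kn$ for all $k\in\mathbb Z$; $(\!(i,j)\!)=(\!(j,i)\!)=(\!(i+kn,j+kn)\!)$. Let $\lambda_n$ be the element with $\lambda_n(k)=k+n$ for $k\not\equiv0\pmod n$ and $\lambda_n(k)=k-n(n-1)$ for $k\equiv 0\pmod n$; its reflection length is $2n-2$. $\textsc{fact}(\lambda_n)$ is the set of sequences $[r_1,\dots,r_{2n-2}]$ of reflections with $r_1\cdots r_{2n-2}=\lambda_n$. Such a sequence is tree-like if one can write $r_k=(\!(a_{k-1},b_k)\!)$ with integers $a_{k-1}<b_k$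 ($1\le k\le 2n-2$) and $a_k\equiv b_k\pmod n$ ($1\le k\le 2n-3$). A reflection $r_\ell$ of $\mathsf r$ increases (resp. decreases) an integer $k$ if $r_\ell r_{\ell+1}\cdots r_{2n-2}(k)>r_{\ell+1}\cdots r_{2n-2}(k)$ (resp. $<$), where the empty product is the identity. *)

theory Defs
  imports Main
begin

text \<open>Affine permutations are modelled as functions int => int; the group
operation is composition, (v w)(k) = v (w k).\<close>

definition arefl :: "int \<Rightarrow> int \<Rightarrow> int \<Rightarrow> int \<Rightarrow> int" where
  "arefl n i j = (\<lambda>m. if m mod n = i mod n then m + (j - i)
                      else if m mod n = j mod n then m + (i - j) else m)"

definition is_arefl :: "int \<Rightarrow> (int \<Rightarrow> int) \<Rightarrow> bool" where
  "is_arefl n r \<longleftrightarrow> (\<exists>i j. i mod n \<noteq> j mod n \<and> r = arefl n i j)"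

definition lambda_n :: "int \<Rightarrow> int \<Rightarrow> int" where
  "lambda_n n m = (if m mod n = 0 then m - n * (n - 1) else m + n)"

definition prodl :: "(int \<Rightarrow> int) list \<Rightarrow> int \<Rightarrow> int" where
  "prodl rs = foldr (\<circ>) rs id"

definition fact_lambda :: "int \<Rightarrow> (int \<Rightarrow> int) list \<Rightarrow> bool" where
  "fact_lambda n rs \<longleftrightarrow> length rs = nat (2 * n - 2) \<and> (\<forall>r\<in>set rs. is_arefl n r)
     \<and> prodl rs = lambda_n n"

text \<open>Tree-like: r_k = ((a_{k-1}, b_k)) with a_{k-1} < b_k (1 <= k <= 2n-2) and
a_k = b_k mod n (1 <= k <= 2n-3). Indices are 1-based: r_k = rs ! (k-1).\<close>
definition tree_like :: "int \<Rightarrow> (int \<Rightarrow> int) list \<Rightarrow> bool" where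
  "tree_like n rs \<longleftrightarrow> (\<exists>a b :: nat \<Rightarrow> int.
     (\<forall>k\<in>{1..nat (2 * n - 2)}. a (k - 1) < b k \<and> rs ! (k - 1) = arefl n (a (k - 1)) (b k))
     \<and> (\<forall>k\<in>{1..nat (2 * n - 3)}. a k mod n = b k mod n))"

definition increases :: "(int \<Rightarrow> int) list \<Rightarrow> nat \<Rightarrow> int \<Rightarrow> bool" where
  "increases rs l m \<longleftrightarrow> prodl (drop (l - 1) rs) m > prodl (drop l rs) m"

definition has_endpoint :: "int \<Rightarrow> (int \<Rightarrow> int) \<Rightarrow> int \<Rightarrow> bool" where
  "has_endpoint n r m \<longleftrightarrow> (\<exists>a b. a mod n \<noteq> b mod n \<and> r = arefl n a b
     \<and> (a mod n = m mod n \<or> b mod n = m mod n))"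

end

theory Submission
  imports Defs
begin

text \<open>Follow the trajectory of a point backwards through the factorization, i.e. its images
under r_k ... r_(2n-2) for k = 2n-1, ..., 1. Because consecutive reflections share the residue
a_k = b_k (mod n), a point that some r_k moves down lands at residue a_(k-1) and is then carried
further down by every earlier link of the chain, ending at residue a_0. Applied to b_(2n-2) this
shows a_0 = 0 (mod n); since lambda_n(y) = y + n is not divisible by n for 1 <= y <= n - 1, no
reflection decreases such a y. Such a y cannot stay fixed, and a single increase would have to be
the non-reflection ((y, y + n)), so each y is increased at least twice. A reflection r_k increases
only points of residue a_(k-1), hence at most one such y, and there are only 2n - 2 reflections:
every y is increased exactly twice, from y to some b_y and then from b_y to y + n. Outside these two
steps the trajectory stays at y or y + n, which any reflection with an endpoint congruent to y
would move.\<close>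

lemma mod_add_diff_eq_if_mod_eq:
  "x mod n = i mod n \<Longrightarrow> (x + (j - i)) mod n = j mod (n::int)"
  by (metis add.commute diff_add_cancel mod_add_left_eq)

lemma arefl_apply_first: "x mod n = i mod n \<Longrightarrow> arefl n i j x = x + (j - i)"
  by (simp add: arefl_def)

lemma arefl_apply_second:
  "i mod n \<noteq> j mod n \<Longrightarrow> x mod n = j mod n \<Longrightarrow> arefl n i j x = x - (j - i)"
  by (simp add: arefl_def)

lemma arefl_apply_other: "x mod n \<noteq> i mod n \<Longrightarrow> x mod n \<noteq> j mod n \<Longrightarrow> arefl n i j x = x"
  by (simp add: arefl_def)

lemma arefl_mod_eq_iff:
  assumes "i mod n \<noteq> j mod n"
  shows "arefl n i j x mod n = arefl n i j x' mod n \<longleftrightarrow> x mod n = x' mod n"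
proof -
  have residue: "arefl n i j z mod n =
      (if z mod n = i mod n then j mod n else if z mod n = j mod n then i mod n else z mod n)" for z
    using mod_add_diff_eq_if_mod_eq[of z n] by (simp add: arefl_def)
  show ?thesis
    unfolding residue using assms by (simp split: if_split)
qed

lemma arefl_cong:
  assumes "i mod n = i' mod n" and "j - i = j' - i'"
  shows "arefl n i j = arefl n i' j'"
proof -
  have "j = i + (j' - i')"
    using assms(2) by simp
  then have "j mod n = j' mod n"
    using mod_add_diff_eq_if_mod_eq[OF assms(1)] by simp
  then show ?thesis using assms unfolding arefl_def by (intro ext) auto
qed

lemma arefl_commute: "i mod n \<noteq> j mod n \<Longrightarrow> arefl n i j = arefl n j i"
  unfolding arefl_def by (intro ext) auto

lemma arefl_eq_arefl_moved_point:
  assumes "i mod n \<noteq> j mod n" and "arefl n i j x \<noteq> x"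
  shows "arefl n i j = arefl n x (arefl n i j x)"
proof (cases "x mod n = i mod n")
  case True
  then show ?thesis
    by (simp add: arefl_apply_first) (rule arefl_cong; simp)
next
  case False
  with assms(2) have "x mod n = j mod n" using arefl_apply_other by blast
  with assms have "arefl n j i = arefl n x (arefl n i j x)"
    by (simp add: arefl_apply_second) (rule arefl_cong; simp)
  with assms show ?thesis by (simp add: arefl_commute)
qed

lemma is_arefl_arefl_iff:
  assumes "0 < n"
  shows "is_arefl n (arefl n i j) \<longleftrightarrow> i mod n \<noteq> j mod n"
proof
  assume "is_arefl n (arefl n i j)"
  then obtain i' j' where ij': "i' mod n \<noteq> j' mod n" "arefl n i j = arefl n i' j'"
    by (auto simp: is_arefl_def)
  show "i mod n \<noteq> j mod n"
  proof
    assume "i mod n = j mod n"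
    then have "arefl n i j i' mod n = i' mod n"
      using mod_add_diff_eq_if_mod_eq by (auto simp: arefl_def)
    with ij' show False by (simp add: arefl_def)
  qed
qed (auto simp: is_arefl_def)

lemma has_endpoint_arefl:
  assumes "i mod n \<noteq> j mod n"
  shows "has_endpoint n (arefl n i j) i" and "has_endpoint n (arefl n i j) j"
  using assms unfolding has_endpoint_def by blast+

lemma has_endpoint_moves:
  assumes "has_endpoint n r y" and "x mod n = y mod n"
  shows "r x \<noteq> x"
  using assms unfolding has_endpoint_def arefl_def by auto

lemma prodl_Cons: "prodl (r # rs) = r \<circ> prodl rs"
  by (simp add: prodl_def)

lemma prodl_mod_eq_iff:
  assumes "0 < n" and "\<forall>r\<in>set rs. is_arefl n r"
  shows "prodl rs x mod n = prodl rs x' mod n \<longleftrightarrow> x mod n = x' mod n"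
  using assms(2)
proof (induction rs)
  case Nil
  then show ?case by (simp add: prodl_def)
next
  case (Cons r rs)
  then obtain i j where "i mod n \<noteq> j mod n" "r = arefl n i j"
    by (auto simp: is_arefl_def)
  with Cons show ?case by (simp add: prodl_Cons arefl_mod_eq_iff)
qed

lemma lambda_n_less_imp_mod:
  assumes "0 < n" and "lambda_n n x < x"
  shows "lambda_n n x mod n = 0"
proof -
  have "x mod n = 0"
    using assms by (auto simp: lambda_n_def split: if_splits)
  then show ?thesis
    by (simp add: lambda_n_def mod_diff_eq[symmetric])
qed

lemma eq_if_adjacent_eq:
  fixes f :: "nat \<Rightarrow> 'a"
  assumes "p \<le> q" and "\<forall>k\<in>{Suc p..q}. f (k - 1) = f k"
  shows "f p = f q"
  using assms
proof (induction q)
  case (Suc q)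
  show ?case
  proof (cases "p = Suc q")
    case False
    with Suc.prems have "p \<le> q" by simp
    with Suc have "f p = f q" by simp
    also have "\<dots> = f (Suc q)" using bspec[OF Suc.prems(2), of "Suc q"] \<open>p \<le> q\<close> by simp
    finally show ?thesis .
  qed simp
qed simp

lemma sum_eq_lower_bound:
  fixes f :: "'a \<Rightarrow> nat"
  assumes "finite A" and "\<forall>x\<in>A. c \<le> f x" and "sum f A \<le> c * card A" and "x \<in> A"
  shows "f x = c"
proof (rule ccontr)
  assume "f x \<noteq> c"
  with assms have "(\<Sum>_\<in>A. c) < sum f A"
    by (intro sum_strict_mono_ex1) (auto intro!: bexI[of _ x])
  with assms(3) show False by (simp add: mult.commute)
qed

text \<open>Indexing is 1-based as in the paper: r_k = rs ! (k - 1) = ((a_(k-1), b_k)), and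
suffix_prod k is the product r_(k+1) ... r_m.\<close>

locale tree_like_seq =
  fixes n :: int and rs :: "(int \<Rightarrow> int) list" and a b :: "nat \<Rightarrow> int"
  assumes n_pos: "0 < n"
    and reflections: "\<forall>r\<in>set rs. is_arefl n r"
    and endpoint_less: "k \<in> {1..length rs} \<Longrightarrow> a (k - 1) < b k"
    and nth_eq_arefl: "k \<in> {1..length rs} \<Longrightarrow> rs ! (k - 1) = arefl n (a (k - 1)) (b k)"
    and endpoints_linked: "k \<in> {1..length rs - 1} \<Longrightarrow> a k mod n = b k mod n"
begin

definition suffix_prod :: "nat \<Rightarrow> int \<Rightarrow> int" where
  "suffix_prod k = prodl (drop k rs)"

lemma suffix_prod_0: "suffix_prod 0 = prodl rs"
  by (simp add: suffix_prod_def)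

lemma suffix_prod_length: "suffix_prod (length rs) = id"
  by (simp add: suffix_prod_def prodl_def)

lemma suffix_prod_step:
  assumes "k \<in> {1..length rs}"
  shows "suffix_prod (k - 1) x = (rs ! (k - 1)) (suffix_prod k x)"
proof -
  from assms obtain j where "k = Suc j" and "j < length rs"
    by (cases k) auto
  then show ?thesis
    by (simp add: suffix_prod_def prodl_Cons Cons_nth_drop_Suc[of j rs, symmetric])
qed

lemma increases_iff: "increases rs k x \<longleftrightarrow> suffix_prod k x < suffix_prod (k - 1) x"
  by (simp add: increases_def suffix_prod_def)

lemma nth_is_arefl: "k \<in> {1..length rs} \<Longrightarrow> is_arefl n (rs ! (k - 1))"
  using reflections nth_mem[of "k - 1" rs] by auto

lemma endpoints_not_cong: "k \<in> {1..length rs} \<Longrightarrow> a (k - 1) mod n \<noteq> b k mod n"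
  using nth_is_arefl nth_eq_arefl is_arefl_arefl_iff[OF n_pos] by metis

lemma suffix_prod_mod_eq_iff:
  "suffix_prod k x mod n = suffix_prod k x' mod n \<longleftrightarrow> x mod n = x' mod n"
  using prodl_mod_eq_iff[OF n_pos] reflections
  by (simp add: suffix_prod_def) (meson in_set_dropD)

lemma suffix_prod_step_down:
  assumes k: "k \<in> {1..length rs}" and x: "suffix_prod k x mod n = b k mod n"
  shows "suffix_prod (k - 1) x = suffix_prod k x - (b k - a (k - 1))"
    and "suffix_prod (k - 1) x mod n = a (k - 1) mod n"
proof -
  show down: "suffix_prod (k - 1) x = suffix_prod k x - (b k - a (k - 1))"
    using suffix_prod_step[OF k] nth_eq_arefl[OF k] endpoints_not_cong[OF k] x
    by (simp add: arefl_apply_second)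
  then have "suffix_prod (k - 1) x = suffix_prod k x + (a (k - 1) - b k)"
    by simp
  then show "suffix_prod (k - 1) x mod n = a (k - 1) mod n"
    using mod_add_diff_eq_if_mod_eq[OF x, of "a (k - 1)"] by simp
qed

lemma increases_imp_mod:
  assumes k: "k \<in> {1..length rs}" and "increases rs k x"
  shows "suffix_prod k x mod n = a (k - 1) mod n"
proof (rule ccontr)
  assume not_a: "suffix_prod k x mod n \<noteq> a (k - 1) mod n"
  have "suffix_prod (k - 1) x \<le> suffix_prod k x"
  proof (cases "suffix_prod k x mod n = b k mod n")
    case True
    then show ?thesis using suffix_prod_step_down(1)[OF k] endpoint_less[OF k] by simp
  next
    case False
    then show ?thesis
      using suffix_prod_step[OF k] nth_eq_arefl[OF k] not_a by (simp add: arefl_apply_other)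
  qed
  with assms(2) show False by (simp add: increases_iff)
qed

lemma decreases_imp_mod:
  assumes k: "k \<in> {1..length rs}" and dec: "suffix_prod (k - 1) x < suffix_prod k x"
  shows "suffix_prod (k - 1) x mod n = a (k - 1) mod n"
proof -
  have "suffix_prod k x mod n = b k mod n"
  proof (rule ccontr)
    assume not_b: "suffix_prod k x mod n \<noteq> b k mod n"
    then have "suffix_prod k x \<le> suffix_prod (k - 1) x"
      using suffix_prod_step[OF k] nth_eq_arefl[OF k] endpoint_less[OF k]
      by (cases "suffix_prod k x mod n = a (k - 1) mod n")
        (simp_all add: arefl_apply_first arefl_apply_other)
    with dec show False by simp
  qed
  then show ?thesis by (rule suffix_prod_step_down(2)[OF k])
qed

lemma descent_from_linked_residue:
  "k < length rs \<Longrightarrow> suffix_prod k x mod n = a k mod n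
    \<Longrightarrow> prodl rs x \<le> suffix_prod k x \<and> prodl rs x mod n = a 0 mod n"
proof (induction k)
  case 0
  then show ?case by (simp add: suffix_prod_0)
next
  case (Suc k)
  have k: "Suc k \<in> {1..length rs}" using Suc.prems by simp
  have "suffix_prod (Suc k) x mod n = b (Suc k) mod n"
    using Suc.prems endpoints_linked[of "Suc k"] by simp
  with suffix_prod_step_down[OF k] endpoint_less[OF k] Suc show ?case by fastforce
qed

lemma decrease_descends:
  assumes "k \<in> {1..length rs}" and "suffix_prod (k - 1) x < suffix_prod k x"
  shows "prodl rs x < suffix_prod k x" and "prodl rs x mod n = a 0 mod n"
proof -
  have "k - 1 < length rs" using assms(1) by auto
  from descent_from_linked_residue[OF this decreases_imp_mod[OF assms]] assms(2)
  show "prodl rs x < suffix_prod k x" and "prodl rs x mod n = a 0 mod n"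
    by simp_all
qed

lemma increasing_reflection:
  assumes k: "k \<in> {1..length rs}" and "increases rs k x"
  shows "rs ! (k - 1) = arefl n (suffix_prod k x) (suffix_prod (k - 1) x)"
proof -
  have step: "suffix_prod (k - 1) x = arefl n (a (k - 1)) (b k) (suffix_prod k x)"
    using suffix_prod_step[OF k] nth_eq_arefl[OF k] by simp
  with assms(2) have "arefl n (a (k - 1)) (b k) (suffix_prod k x) \<noteq> suffix_prod k x"
    by (simp add: increases_iff)
  then show ?thesis
    using arefl_eq_arefl_moved_point[OF endpoints_not_cong[OF k]] nth_eq_arefl[OF k] step
    by metis
qed

end

locale tree_like_factorization = tree_like_seq +
  assumes length_rs: "length rs = nat (2 * n - 2)"
    and prodl_rs: "prodl rs = lambda_n n"
begin

lemma first_endpoint_mod: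
  assumes "rs \<noteq> []"
  shows "a 0 mod n = 0"
proof -
  let ?m = "length rs"
  have m: "?m \<in> {1..?m}" using assms by (simp add: Suc_le_eq)
  have "suffix_prod (?m - 1) (b ?m) = a (?m - 1)"
    using suffix_prod_step[OF m] nth_eq_arefl[OF m] endpoints_not_cong[OF m]
    by (simp add: suffix_prod_length arefl_apply_second)
  with endpoint_less[OF m] have "suffix_prod (?m - 1) (b ?m) < suffix_prod ?m (b ?m)"
    by (simp add: suffix_prod_length)
  from decrease_descends[OF m this]
  have "lambda_n n (b ?m) < b ?m" and "lambda_n n (b ?m) mod n = a 0 mod n"
    by (simp_all add: prodl_rs suffix_prod_length)
  then show ?thesis using lambda_n_less_imp_mod[OF n_pos] by simp
qed

lemma prodl_rs_small: "y \<in> {1..n - 1} \<Longrightarrow> prodl rs y = y + n"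
  by (simp add: prodl_rs lambda_n_def)

lemma no_reflection_decreases:
  assumes y: "y \<in> {1..n - 1}" and k: "k \<in> {1..length rs}"
  shows "suffix_prod k y \<le> suffix_prod (k - 1) y"
proof (rule ccontr)
  assume "\<not> suffix_prod k y \<le> suffix_prod (k - 1) y"
  then have "prodl rs y mod n = a 0 mod n"
    using decrease_descends(2)[OF k] by simp
  also have "\<dots> = 0" using first_endpoint_mod k by (cases rs) auto
  finally show False using y by (simp add: prodl_rs_small)
qed

definition increasing_steps :: "int \<Rightarrow> nat set" where
  "increasing_steps y = {k \<in> {1..length rs}. increases rs k y}"

lemma finite_increasing_steps: "finite (increasing_steps y)"
  by (simp add: increasing_steps_def)

lemma suffix_prod_eq_if_not_increasing:
  assumes y: "y \<in> {1..n - 1}" and "p \<le> q" and "q \<le> length rs"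
    and "\<forall>k\<in>{Suc p..q}. k \<notin> increasing_steps y"
  shows "suffix_prod p y = suffix_prod q y"
proof (rule eq_if_adjacent_eq[OF \<open>p \<le> q\<close>], intro ballI)
  fix k assume "k \<in> {Suc p..q}"
  with assms have k: "k \<in> {1..length rs}" and "\<not> increases rs k y"
    by (auto simp: increasing_steps_def)
  with no_reflection_decreases[OF y k] show "suffix_prod (k - 1) y = suffix_prod k y"
    by (simp add: increases_iff)
qed

lemma two_le_card_increasing_steps:
  assumes y: "y \<in> {1..n - 1}"
  shows "2 \<le> card (increasing_steps y)"
proof (rule ccontr)
  assume "\<not> 2 \<le> card (increasing_steps y)"
  then consider "increasing_steps y = {}" | l where "increasing_steps y = {l}"
    using finite_increasing_steps
    by (metis One_nat_def card_0_eq card_1_singletonE less_2_cases not_le_imp_less)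
  then show False
  proof cases
    case 1
    then have "suffix_prod 0 y = suffix_prod (length rs) y"
      using suffix_prod_eq_if_not_increasing[OF y] by simp
    with y n_pos show False by (simp add: suffix_prod_0 suffix_prod_length prodl_rs_small)
  next
    case 2
    then have l: "l \<in> {1..length rs}" and "increases rs l y"
      by (auto simp: increasing_steps_def)
    have "suffix_prod l y = suffix_prod (length rs) y"
      by (rule suffix_prod_eq_if_not_increasing[OF y]) (use 2 l in auto)
    moreover have "suffix_prod 0 y = suffix_prod (l - 1) y"
      by (rule suffix_prod_eq_if_not_increasing[OF y]) (use 2 l in auto)
    ultimately have "suffix_prod l y = y" and "suffix_prod (l - 1) y = y + n"
      using y by (simp_all add: suffix_prod_length suffix_prod_0 prodl_rs_small)
    then have "rs ! (l - 1) = arefl n y (y + n)"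
      using increasing_reflection[OF l \<open>increases rs l y\<close>] by simp
    with nth_is_arefl[OF l] show False by (simp add: is_arefl_arefl_iff[OF n_pos])
  qed
qed

lemma card_increased_le_one: "card {y \<in> {1..n - 1}. k \<in> increasing_steps y} \<le> 1"
proof -
  let ?Y = "{y \<in> {1..n - 1}. k \<in> increasing_steps y}"
  have "\<forall>y\<in>?Y. \<forall>y'\<in>?Y. y = y'"
  proof (intro ballI)
    fix y y' assume that: "y \<in> ?Y" "y' \<in> ?Y"
    then have "suffix_prod k y mod n = suffix_prod k y' mod n"
      using increases_imp_mod by (auto simp: increasing_steps_def)
    then have "y mod n = y' mod n" by (simp add: suffix_prod_mod_eq_iff)
    with that show "y = y'" by simp
  qed
  moreover have "finite ?Y" by (rule finite_subset[of _ "{1..n - 1}"]) auto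
  ultimately show ?thesis using card_le_Suc0_iff_eq[of ?Y] by simp
qed

lemma card_increasing_steps:
  assumes "y \<in> {1..n - 1}"
  shows "card (increasing_steps y) = 2"
proof -
  have "(\<Sum>y\<in>{1..n - 1}. card (increasing_steps y))
      = (\<Sum>k\<in>{1..length rs}. card {y \<in> {1..n - 1}. k \<in> increasing_steps y})"
  proof -
    have "{k \<in> {1..length rs}. k \<in> increasing_steps y} = increasing_steps y" for y
      by (auto simp: increasing_steps_def)
    moreover have "(\<Sum>y\<in>{1..n - 1}. card {k \<in> {1..length rs}. k \<in> increasing_steps y})
        = (\<Sum>k\<in>{1..length rs}. card {y \<in> {1..n - 1}. k \<in> increasing_steps y})"
      by (intro sum_multicount_gen) auto
    ultimately show ?thesis by simp
  qed
  also have "\<dots> \<le> (\<Sum>k\<in>{1..length rs}. 1)"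
    by (intro sum_mono card_increased_le_one)
  also have "\<dots> = 2 * card {1..n - 1}"
    using length_rs by simp
  finally have sum_le: "(\<Sum>y\<in>{1..n - 1}. card (increasing_steps y)) \<le> 2 * card {1..n - 1}" .
  show ?thesis
    using two_le_card_increasing_steps
    by (intro sum_eq_lower_bound[OF finite_atLeastAtMost_int _ sum_le assms]) blast
qed

lemma increasing_steps_reflections:
  assumes y: "y \<in> {1..n - 1}" and fl: "increasing_steps y = {f, l}" "f < l"
  shows "\<exists>B>y. rs ! (f - 1) = arefl n (B - n) y \<and> rs ! (l - 1) = arefl n y B"
proof -
  from fl have f: "f \<in> {1..length rs}" "increases rs f y"
    and l: "l \<in> {1..length rs}" "increases rs l y"
    by (auto simp: increasing_steps_def)
  define B where "B = suffix_prod (l - 1) y"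
  have "suffix_prod l y = suffix_prod (length rs) y"
    by (rule suffix_prod_eq_if_not_increasing[OF y]) (use fl l in auto)
  then have after_l: "suffix_prod l y = y"
    by (simp add: suffix_prod_length)
  have between: "suffix_prod f y = B"
    unfolding B_def by (rule suffix_prod_eq_if_not_increasing[OF y]) (use fl l in auto)
  have "suffix_prod 0 y = suffix_prod (f - 1) y"
    by (rule suffix_prod_eq_if_not_increasing[OF y]) (use fl f in auto)
  then have before_f: "suffix_prod (f - 1) y = y + n"
    using y by (simp add: suffix_prod_0 prodl_rs_small)
  show ?thesis
  proof (intro exI[of _ B] conjI)
    show "y < B" using l(2) after_l by (simp add: B_def increases_iff)
    have "rs ! (f - 1) = arefl n B (y + n)"
      using increasing_reflection[OF f] between before_f by simp
    also have "\<dots> = arefl n (B - n) y"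
      by (rule arefl_cong) (simp_all add: mod_diff_right_eq[symmetric])
    finally show "rs ! (f - 1) = arefl n (B - n) y" .
    show "rs ! (l - 1) = arefl n y B"
      using increasing_reflection[OF l] after_l by (simp add: B_def)
  qed
qed

lemma has_endpoint_between:
  assumes y: "y \<in> {1..n - 1}" and fl: "increasing_steps y = {f, l}" "f < l"
    and j: "j \<in> {1..length rs}" and "has_endpoint n (rs ! (j - 1)) y"
  shows "f \<le> j \<and> j \<le> l"
proof (rule ccontr)
  assume out: "\<not> (f \<le> j \<and> j \<le> l)"
  with fl have "j \<notin> increasing_steps y" by auto
  with j have "\<not> increases rs j y" by (simp add: increasing_steps_def)
  with no_reflection_decreases[OF y j] have fixed: "suffix_prod (j - 1) y = suffix_prod j y"
    by (simp add: increases_iff)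
  have "suffix_prod j y mod n = y mod n"
  proof (cases "j < f")
    case True
    then have "suffix_prod 0 y = suffix_prod j y"
      by (intro suffix_prod_eq_if_not_increasing[OF y]) (use fl j in auto)
    then have "suffix_prod j y = y + n" using y by (simp add: suffix_prod_0 prodl_rs_small)
    then show ?thesis by simp
  next
    case False
    with out have "suffix_prod j y = suffix_prod (length rs) y"
      by (intro suffix_prod_eq_if_not_increasing[OF y]) (use fl j in auto)
    then show ?thesis by (simp add: suffix_prod_length)
  qed
  with has_endpoint_moves[OF assms(5)] have "(rs ! (j - 1)) (suffix_prod j y) \<noteq> suffix_prod j y"
    by blast
  with fixed suffix_prod_step[OF j] show False by simp
qed

end

theorem corollary3p6:
  fixes n k :: int and rs :: "(int \<Rightarrow> int) list"
  assumes "n \<ge> 2"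
    and "fact_lambda n rs"
    and "tree_like n rs"
    and "1 \<le> k" and "k \<le> n - 1"
  shows "\<exists>f l. f \<in> {1..length rs} \<and> l \<in> {1..length rs} \<and> f < l
     \<and> has_endpoint n (rs ! (f - 1)) k \<and> has_endpoint n (rs ! (l - 1)) k
     \<and> (\<forall>j\<in>{1..length rs}. has_endpoint n (rs ! (j - 1)) k \<longrightarrow> f \<le> j \<and> j \<le> l)
     \<and> {j \<in> {1..length rs}. increases rs j k} = {f, l}
     \<and> (\<exists>bk. bk \<noteq> k
          \<and> (bk > k \<longrightarrow> rs ! (f - 1) = arefl n (bk - n) k \<and> rs ! (l - 1) = arefl n k bk)
          \<and> (bk < k \<longrightarrow> rs ! (f - 1) = arefl n bk k \<and> rs ! (l - 1) = arefl n (k - n) bk))"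
proof -
  obtain a b
    where "\<forall>i\<in>{1..nat (2 * n - 2)}. a (i - 1) < b i \<and> rs ! (i - 1) = arefl n (a (i - 1)) (b i)"
    and "\<forall>i\<in>{1..nat (2 * n - 3)}. a i mod n = b i mod n"
    using assms(3) by (auto simp: tree_like_def)
  moreover have "nat (2 * n - 3) = nat (2 * n - 2) - 1" using assms(1) by simp
  ultimately interpret tree_like_factorization n rs a b
    using assms(1,2) by unfold_locales (auto simp: fact_lambda_def)
  have k: "k \<in> {1..n - 1}" using assms(4,5) by simp
  obtain f l where fl: "increasing_steps k = {f, l}" "f < l"
    using card_increasing_steps[OF k] by (metis card_2_iff insert_commute linorder_neqE_nat)
  then have f: "f \<in> {1..length rs}" and l: "l \<in> {1..length rs}"
    by (auto simp: increasing_steps_def)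
  obtain B where B: "B > k" "rs ! (f - 1) = arefl n (B - n) k" "rs ! (l - 1) = arefl n k B"
    using increasing_steps_reflections[OF k fl] by blast
  have "has_endpoint n (rs ! (f - 1)) k" "has_endpoint n (rs ! (l - 1)) k"
    using nth_is_arefl[OF f] nth_is_arefl[OF l] B has_endpoint_arefl
    by (simp_all add: is_arefl_arefl_iff[OF n_pos])
  moreover have "\<forall>j\<in>{1..length rs}. has_endpoint n (rs ! (j - 1)) k \<longrightarrow> f \<le> j \<and> j \<le> l"
    using has_endpoint_between[OF k fl] by blast
  moreover have "{j \<in> {1..length rs}. increases rs j k} = {f, l}"
    using fl(1) by (simp add: increasing_steps_def)
  moreover have "\<exists>bk. bk \<noteq> k
      \<and> (bk > k \<longrightarrow> rs ! (f - 1) = arefl n (bk - n) k \<and> rs ! (l - 1) = arefl n k bk)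
      \<and> (bk < k \<longrightarrow> rs ! (f - 1) = arefl n bk k \<and> rs ! (l - 1) = arefl n (k - n) bk)"
    using B by (intro exI[of _ B]) simp
  ultimately show ?thesis
    using f l fl(2) by blast
qed

end
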